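(* Every odd wheel is cycle-extendable.
   Context: An odd wheel is obtained from an odd cycle $u_0u_1\cdots u_{2k}u_0$ ($k\ge1$) by adding a new vertex $h$ and the edges $hu_i$ for all $i$. A matching covered graph (connected, at least two vertices, every edge in a perfect matching) is cycle-extendable if for every even cycle $C$ the graph $G-V(C)$ has a perfect matching. *)

theory Defs
  imports Main
begin

definition simple_graph :: "'a set \<Rightarrow> 'a set set \<Rightarrow> bool" where
  "simple_graph V E \<longleftrightarrow> finite V \<and> (\<forall>e\<in>E. \<exists>x y. x \<noteq> y \<and> x \<in> V \<and> y \<in> V \<and> e = {x, y})"

definition perfect_matching :: "'a set \<Rightarrow> 'a set set \<Rightarrow> 'a set set \<Rightarrow> bool" where
  "perfect_matching V E M \<longleftrightarrow> M \<subseteq> E \<and> (\<forall>v\<in>V. \<exists>!e. e \<in> M \<and> v \<in> e)"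

definition has_perfect_matching :: "'a set \<Rightarrow> 'a set set \<Rightarrow> bool" where
  "has_perfect_matching V E \<longleftrightarrow> (\<exists>M. perfect_matching V E M)"

definition del_verts_V :: "'a set \<Rightarrow> 'a set \<Rightarrow> 'a set" where
  "del_verts_V V S = V - S"

definition del_verts_E :: "'a set set \<Rightarrow> 'a set \<Rightarrow> 'a set set" where
  "del_verts_E E S = {e \<in> E. e \<inter> S = {}}"

definition connected_graph :: "'a set \<Rightarrow> 'a set set \<Rightarrow> bool" where
  "connected_graph V E \<longleftrightarrow> (\<forall>x\<in>V. \<forall>y\<in>V. (\<lambda>a b. {a, b} \<in> E)\<^sup>*\<^sup>* x y)"

definition matching_covered :: "'a set \<Rightarrow> 'a set set \<Rightarrow> bool" where
  "matching_covered V E \<longleftrightarrow> simple_graph V E \<and> connected_graph V E \<and> card V \<ge> 2 \<and>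
     (\<forall>e\<in>E. \<exists>M. perfect_matching V E M \<and> e \<in> M)"

definition is_cycle :: "'a set set \<Rightarrow> 'a list \<Rightarrow> bool" where
  "is_cycle E vs \<longleftrightarrow> length vs \<ge> 3 \<and> distinct vs \<and>
     (\<forall>i < length vs. {vs ! i, vs ! ((i + 1) mod length vs)} \<in> E)"

definition cycle_extendable :: "'a set \<Rightarrow> 'a set set \<Rightarrow> bool" where
  "cycle_extendable V E \<longleftrightarrow> matching_covered V E \<and>
     (\<forall>vs. is_cycle E vs \<and> even (length vs) \<longrightarrow>
        has_perfect_matching (del_verts_V V (set vs)) (del_verts_E E (set vs)))"

text \<open>Odd wheel: rim cycle u_0 ... u_{2k} (k \<ge> 1) plus hub h adjacent to all u_i.\<close>
definition odd_wheel :: "'a set \<Rightarrow> 'a set set \<Rightarrow> bool" where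
  "odd_wheel V E \<longleftrightarrow> (\<exists>k::nat. k \<ge> 1 \<and> (\<exists>h u.
     inj_on u {0..2*k} \<and> h \<notin> u ` {0..2*k} \<and>
     V = insert h (u ` {0..2*k}) \<and>
     E = {{u i, u ((i + 1) mod (2*k+1))} | i. i \<le> 2*k} \<union> {{h, u i} | i. i \<le> 2*k}))"

end

theory Submission
  imports Defs
begin

(* Deleting the hub from a cycle through it leaves a path in the rim, i.e. an arc of
   consecutive rim vertices, whereas a cycle avoiding the hub is the whole rim, which has odd
   length n.  Hence an even cycle C passes through the hub, and G - V(C) is the complementary
   arc of n + 1 - |C| rim vertices, an even number: pairing consecutive vertices of this arc
   gives a perfect matching.  Likewise the spoke h u_a together with the pairing of the arc
   u_(a+1) ... u_(a+n-1) is a perfect matching, and it contains the rim edge u_(a+1) u_(a+2);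
   so every edge lies in a perfect matching. *)

fun pair_up :: "'a list \<Rightarrow> 'a set set" where
  "pair_up (x # y # xs) = insert {x, y} (pair_up xs)"
| "pair_up _ = {}"

lemma Union_pair_up_subset: "\<Union> (pair_up xs) \<subseteq> set xs"
  by (induction xs rule: pair_up.induct) auto

lemma perfect_matching_insert_edge:
  assumes "perfect_matching V E M" "\<Union> M \<subseteq> V" "{x, y} \<in> E" "x \<notin> V" "y \<notin> V"
  shows "perfect_matching (insert x (insert y V)) E (insert {x, y} M)"
  using assms unfolding perfect_matching_def by blast

lemma perfect_matching_pair_up:
  assumes "distinct xs" "even (length xs)" "successively (\<lambda>x y. {x, y} \<in> E) xs"
  shows "perfect_matching (set xs) E (pair_up xs)"
  using assms
proof (induction xs rule: pair_up.induct)
  case (1 x y xs)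
  then have "successively (\<lambda>x y. {x, y} \<in> E) xs"
    by (cases xs) auto
  with 1 show ?case
    by (simp add: perfect_matching_insert_edge Union_pair_up_subset)
qed (auto simp: perfect_matching_def)

lemma is_cycle_rotate:
  assumes "is_cycle E vs"
  shows "is_cycle E (rotate k vs)"
  unfolding is_cycle_def
proof (intro conjI allI impI)
  let ?L = "length vs"
  have adj: "{vs ! j, vs ! ((j + 1) mod ?L)} \<in> E" if "j < ?L" for j
    using assms that unfolding is_cycle_def by blast
  fix i assume "i < length (rotate k vs)"
  then have i: "i < ?L" and L: "0 < ?L"
    by auto
  then have "rotate k vs ! ((i + 1) mod ?L) = vs ! (((k + i) mod ?L + 1) mod ?L)"
    by (simp add: nth_rotate mod_add_right_eq mod_Suc_eq)
  then show "{rotate k vs ! i, rotate k vs ! ((i + 1) mod length (rotate k vs))} \<in> E"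
    using i L adj[of "(k + i) mod ?L"] by (simp add: nth_rotate)
qed (use assms in \<open>auto simp: is_cycle_def\<close>)

lemma is_cycle_successively:
  assumes "is_cycle E vs"
  shows "successively (\<lambda>x y. {x, y} \<in> E) vs"
proof -
  have "{vs ! i, vs ! Suc i} \<in> E" if "Suc i < length vs" for i
    using assms that unfolding is_cycle_def by (metis Suc_eq_plus1 Suc_lessD mod_less)
  then show ?thesis
    by (simp add: successively_conv_nth)
qed

lemma is_cycle_set_subset:
  assumes "is_cycle E vs"
  shows "set vs \<subseteq> \<Union> E"
proof
  fix x assume "x \<in> set vs"
  then obtain i where "i < length vs" "vs ! i = x"
    by (auto simp: in_set_conv_nth)
  with assms have "{x, vs ! ((i + 1) mod length vs)} \<in> E"
    unfolding is_cycle_def by blast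
  then show "x \<in> \<Union> E"
    by blast
qed

lemma has_perfect_matching_path_del_verts:
  assumes "distinct xs" "even (length xs)" "successively (\<lambda>x y. {x, y} \<in> E) xs"
    and "set xs \<inter> S = {}"
  shows "has_perfect_matching (set xs) (del_verts_E E S)"
proof -
  have "successively (\<lambda>x y. {x, y} \<in> del_verts_E E S) xs"
    using assms(3,4) by (auto simp: del_verts_E_def intro: successively_mono)
  then show ?thesis
    unfolding has_perfect_matching_def using assms(1,2) perfect_matching_pair_up by blast
qed

lemma range_nat_mod:
  assumes "0 < n"
  shows "range (\<lambda>i. F (nat (i mod int n))) = F ` {..<n}"
proof -
  have "F j \<in> range (\<lambda>i. F (nat (i mod int n)))" if "j < n" for j
    using that by (intro range_eqI[of _ _ "int j"]) (simp flip: of_nat_mod)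
  moreover have "nat (i mod int n) < n" for i
    using assms by (simp add: nat_less_iff)
  ultimately show ?thesis
    by auto
qed

(* The rim vertex u_i of the odd wheel is U i for 0 \<le> i < n.  Extending it n-periodically to
   the integers treats both directions of the rim alike: rim_walk c s l below is the arc of l
   vertices starting at U c and running in direction s = 1 or s = -1. *)
locale periodic_odd_wheel =
  fixes n :: nat and U :: "int \<Rightarrow> 'a" and h :: 'a and V :: "'a set" and E :: "'a set set"
  assumes three_le_n: "3 \<le> n" and odd_n: "odd n"
    and U_eq_iff: "U i = U j \<longleftrightarrow> i mod int n = j mod int n"
    and hub_notin_rim: "h \<notin> range U"
    and V_eq: "V = insert h (range U)"
    and E_eq: "E = range (\<lambda>i. {U i, U (i + 1)}) \<union> range (\<lambda>i. {h, U i})"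
begin

definition rim_walk :: "int \<Rightarrow> int \<Rightarrow> nat \<Rightarrow> 'a list" where
  "rim_walk c s l = map (\<lambda>t. U (c + s * int t)) [0..<l]"

lemma length_rim_walk [simp]: "length (rim_walk c s l) = l"
  by (simp add: rim_walk_def)

lemma rim_walk_0 [simp]: "rim_walk c s 0 = []"
  by (simp add: rim_walk_def)

lemma nth_rim_walk [simp]: "t < l \<Longrightarrow> rim_walk c s l ! t = U (c + s * int t)"
  by (simp add: rim_walk_def)

lemma rim_walk_add: "rim_walk c s (a + b) = rim_walk c s a @ rim_walk (c + s * int a) s b"
proof -
  have "[0..<a + b] = [0..<a] @ map (\<lambda>t. t + a) [0..<b]"
    using upt_add_eq_append[of 0 a b] map_add_upt[of a b] by (simp add: add.commute[of b a])
  then show ?thesis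
    by (simp add: rim_walk_def algebra_simps)
qed

lemma rim_walk_Suc: "rim_walk c s (Suc l) = U c # rim_walk (c + s) s l"
  using rim_walk_add[of c s 1 l] by (simp add: rim_walk_def)

lemma U_shift: "U a = U b \<Longrightarrow> U (a + d) = U (b + d)"
  unfolding U_eq_iff by (rule mod_add_cong) simp_all

lemma U_walk_eq_iff:
  assumes "\<bar>s\<bar> = 1"
  shows "U (c + s * a) = U (c + s * b) \<longleftrightarrow> int n dvd a - b"
proof -
  have "c + s * a - (c + s * b) = s * (a - b)"
    by (simp add: algebra_simps)
  moreover have "int n dvd s * (a - b) \<longleftrightarrow> int n dvd a - b"
    using assms by (simp add: dvd_mult_unit_iff' zdvd1_eq)
  ultimately show ?thesis
    by (simp add: U_eq_iff mod_eq_dvd_iff)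
qed

lemma distinct_rim_walk_iff:
  assumes "\<bar>s\<bar> = 1"
  shows "distinct (rim_walk c s l) \<longleftrightarrow> l \<le> n"
proof
  assume distinct: "distinct (rim_walk c s l)"
  show "l \<le> n"
  proof (rule ccontr)
    assume "\<not> l \<le> n"
    then have "n \<in> set [0..<l]" "0 \<in> set [0..<l]"
      by auto
    moreover have "U (c + s * int n) = U (c + s * int 0)"
      using U_walk_eq_iff[OF assms, of c "int n" 0] by simp
    ultimately have "n = 0"
      using distinct unfolding rim_walk_def distinct_map inj_on_def by blast
    with three_le_n show False
      by simp
  qed
next
  assume "l \<le> n"
  have "t = t'" if "t < n" "t' < n" "int n dvd int t - int t'" for t t'
  proof -
    have "int t mod int n = int t' mod int n"
      using that(3) by (simp only: mod_eq_dvd_iff)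
    with that(1,2) show ?thesis
      by (simp flip: of_nat_mod)
  qed
  with \<open>l \<le> n\<close> show "distinct (rim_walk c s l)"
    unfolding rim_walk_def distinct_map inj_on_def U_walk_eq_iff[OF assms] by auto
qed

lemma set_rim_walk_full:
  assumes "\<bar>s\<bar> = 1"
  shows "set (rim_walk c s n) = range U"
proof -
  have "U i \<in> set (rim_walk c s n)" for i
  proof -
    define t where "t = (s * (i - c)) mod int n"
    have t: "0 \<le> t" "t < int n"
      using three_le_n by (simp_all add: t_def)
    have "int n dvd t - s * (i - c)"
      unfolding t_def mod_eq_dvd_iff[symmetric] by simp
    then have "int n dvd s * (t - s * (i - c))"
      by simp
    also have "s * (t - s * (i - c)) = (c + s * t) - i"
      using assms abs_mult_self_eq[of s] by (simp add: algebra_simps flip: mult.assoc)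
    finally have "U (c + s * int (nat t)) = U i"
      using t by (simp add: U_eq_iff mod_eq_dvd_iff)
    with t show ?thesis
      unfolding rim_walk_def by (auto intro!: image_eqI[of _ _ "nat t"])
  qed
  then show ?thesis
    by (auto simp: rim_walk_def)
qed

lemma rim_walk_complement:
  assumes "\<bar>s\<bar> = 1" "l \<le> n"
  shows "range U - set (rim_walk c s l) = set (rim_walk (c + s * int l) s (n - l))"
proof -
  have "rim_walk c s n = rim_walk c s l @ rim_walk (c + s * int l) s (n - l)"
    using rim_walk_add[of c s l "n - l"] assms(2) by simp
  moreover have "distinct (rim_walk c s n)" "set (rim_walk c s n) = range U"
    using distinct_rim_walk_iff set_rim_walk_full assms(1) by simp_all
  ultimately show ?thesis
    by auto
qed

lemma rim_edge:
  assumes "\<bar>s\<bar> = 1"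
  shows "{U i, U (i + s)} \<in> E"
proof (cases "s = 1")
  case False
  with assms have "s = -1"
    by linarith
  then have "{U i, U (i + s)} = {U (i - 1), U (i - 1 + 1)}"
    by (simp add: insert_commute)
  then show ?thesis
    unfolding E_eq by blast
qed (auto simp: E_eq)

lemma rim_neighbour:
  assumes "\<bar>s\<bar> = 1" "{U i, x} \<in> E" "x \<noteq> h"
  shows "x = U (i + s) \<or> x = U (i - s)"
proof -
  have "h \<notin> {U i, x}"
    using assms(3) hub_notin_rim by auto
  then obtain a where "{U i, x} = {U a, U (a + 1)}"
    using assms(2) unfolding E_eq by auto
  then have "U i = U a \<and> x = U (a + 1) \<or> U i = U (a + 1) \<and> x = U a"
    by (simp add: doubleton_eq_iff)
  then have "x = U (i + 1) \<or> x = U (i - 1)"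
    using U_shift[of a i 1] U_shift[of "a + 1" i "-1"] by auto
  moreover have "s = 1 \<or> s = -1"
    using assms(1) by linarith
  ultimately show ?thesis
    by auto
qed

lemma successively_rim_walk:
  assumes "\<bar>s\<bar> = 1"
  shows "successively (\<lambda>x y. {x, y} \<in> E) (rim_walk c s l)"
proof (induction l arbitrary: c)
  case (Suc l)
  have "rim_walk (c + s) s l = [] \<or> hd (rim_walk (c + s) s l) = U (c + s)"
    by (cases l) (simp_all add: rim_walk_Suc)
  then show ?case
    using Suc.IH rim_edge[OF assms] by (auto simp: rim_walk_Suc successively_Cons)
qed simp

lemma rim_path_is_rim_walk:
  assumes "p \<noteq> []" "distinct p" "successively (\<lambda>x y. {x, y} \<in> E) p" "set p \<subseteq> range U"
  shows "\<exists>c s. \<bar>s\<bar> = 1 \<and> p = rim_walk c s (length p)"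
  using assms
proof (induction p rule: list_nonempty_induct)
  case (single x)
  then obtain c where "[x] = rim_walk c 1 1"
    by (auto simp: rim_walk_Suc)
  then show ?case
    by force
next
  case (cons x p)
  then obtain c s where s: "\<bar>s\<bar> = 1" and p: "p = rim_walk c s (length p)"
    by (auto simp: successively_Cons)
  from cons.hyps obtain l where l: "length p = Suc l"
    by (cases p) auto
  with p have p_Cons: "p = U c # rim_walk (c + s) s l"
    by (simp add: rim_walk_Suc)
  have "{U c, x} \<in> E" "x \<noteq> h"
    using cons.prems p_Cons hub_notin_rim by (auto simp: successively_Cons insert_commute)
  then have x: "x = U (c + s) \<or> x = U (c - s)"
    using rim_neighbour[OF s] by blast
  (* x differs from the second vertex U (c + s) of p, if there is one, so the walk keeps its
     direction; if p is a single vertex, the direction is chosen to fit x. *)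
  have "\<exists>s'. \<bar>s'\<bar> = 1 \<and> x = U (c - s') \<and> p = rim_walk c s' (length p)"
  proof (cases l)
    case 0
    then have "p = rim_walk c s' (length p)" for s'
      using p_Cons l by (simp add: rim_walk_Suc)
    with s x show ?thesis
      by (metis abs_minus_cancel diff_minus_eq_add)
  next
    case (Suc l')
    then have "x \<noteq> U (c + s)"
      using cons.prems(1) p_Cons by (auto simp: rim_walk_Suc)
    with s x p show ?thesis
      by blast
  qed
  then obtain s' where "\<bar>s'\<bar> = 1" "x = U (c - s')" "p = rim_walk c s' (length p)"
    by blast
  then have "x # p = rim_walk (c - s') s' (length (x # p))"
    using rim_walk_Suc[of "c - s'" s' "length p"] by simp
  with \<open>\<bar>s'\<bar> = 1\<close> show ?case
    by blast
qed

lemma Union_E_subset: "\<Union> E \<subseteq> V"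
  unfolding E_eq V_eq by blast

lemma finite_V: "finite V"
  using set_rim_walk_full[of 1 0] V_eq by (metis abs_one finite_insert finite_set)

lemma simple_graph: "simple_graph V E"
  unfolding simple_graph_def
proof (intro conjI ballI finite_V)
  fix e assume "e \<in> E"
  then obtain i where "e = {U i, U (i + 1)} \<or> e = {h, U i}"
    unfolding E_eq by blast
  moreover have "U i \<noteq> U (i + 1)"
    using distinct_rim_walk_iff[of 1 i 2] three_le_n by (simp add: rim_walk_Suc numeral_2_eq_2)
  moreover have "h \<noteq> U i"
    using hub_notin_rim by auto
  ultimately show "\<exists>x y. x \<noteq> y \<and> x \<in> V \<and> y \<in> V \<and> e = {x, y}"
    unfolding V_eq by blast
qed

lemma connected_graph: "connected_graph V E"
proof -
  have "(\<lambda>a b. {a, b} \<in> E)\<^sup>*\<^sup>* x h \<and> (\<lambda>a b. {a, b} \<in> E)\<^sup>*\<^sup>* h x" if "x \<in> V" for x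
  proof (cases "x = h")
    case False
    with that have "{h, x} \<in> E"
      unfolding V_eq E_eq by blast
    then show ?thesis
      by (simp add: insert_commute r_into_rtranclp)
  qed simp
  then show ?thesis
    unfolding connected_graph_def by (meson rtranclp_trans)
qed

lemma two_le_card_V: "2 \<le> card V"
proof -
  have "h \<noteq> U 0"
    using hub_notin_rim by auto
  then have "card {h, U 0} = 2"
    by simp
  moreover have "{h, U 0} \<subseteq> V"
    unfolding V_eq by blast
  ultimately show ?thesis
    using finite_V by (metis card_mono)
qed

lemma perfect_matching_spoke_arc:
  "perfect_matching V E (insert {h, U a} (pair_up (rim_walk (a + 1) 1 (n - 1))))"
proof -
  let ?P = "rim_walk (a + 1) 1 (n - 1)"
  have "rim_walk a 1 n = U a # ?P"
    using rim_walk_Suc[of a 1 "n - 1"] three_le_n by simp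
  then have distinct: "distinct (U a # ?P)" and range: "range U = insert (U a) (set ?P)"
    using distinct_rim_walk_iff[of 1 a n] set_rim_walk_full[of 1 a] by simp_all
  have "distinct ?P" "even (length ?P)"
    using distinct odd_n three_le_n by simp_all
  then have "perfect_matching (set ?P) E (pair_up ?P)"
    using successively_rim_walk by (intro perfect_matching_pair_up) simp_all
  moreover have "{h, U a} \<in> E" "h \<notin> set ?P"
    using hub_notin_rim range unfolding E_eq by auto
  ultimately show ?thesis
    unfolding V_eq range using distinct
    by (intro perfect_matching_insert_edge Union_pair_up_subset) auto
qed

lemma matching_covered: "matching_covered V E"
  unfolding matching_covered_def
proof (intro conjI ballI simple_graph connected_graph two_le_card_V)
  fix e assume "e \<in> E"
  then obtain i where "e = {U i, U (i + 1)} \<or> e = {h, U i}"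
    unfolding E_eq by blast
  (* the pairing in the matching of the spoke {h, U (i - 1)} starts with {U i, U (i + 1)} *)
  moreover have "{U i, U (i + 1)} \<in> pair_up (rim_walk (i - 1 + 1) 1 (n - 1))"
    using three_le_n rim_walk_Suc[of i 1 "n - 2"] rim_walk_Suc[of "i + 1" 1 "n - 3"]
    by (simp add: numeral_2_eq_2 numeral_3_eq_3 Suc_diff_Suc)
  ultimately show "\<exists>M. perfect_matching V E M \<and> e \<in> M"
    using perfect_matching_spoke_arc by blast
qed

lemma closed_rim_walk_length:
  assumes s: "\<bar>s\<bar> = 1" and "1 \<le> m" and distinct: "distinct (rim_walk c s (m + 2))"
    and closing: "{U (c + s * int (m + 1)), U c} \<in> E"
  shows "m + 2 = n"
proof -
  have "U c \<noteq> h"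
    using hub_notin_rim by auto
  with closing have "U c = U (c + s * int (m + 1) + s) \<or> U c = U (c + s * int (m + 1) - s)"
    using rim_neighbour[OF s, of "c + s * int (m + 1)" "U c"] by blast
  moreover have "c + s * int (m + 1) + s = c + s * int (m + 2)"
    and "c + s * int (m + 1) - s = c + s * int m"
    by (simp_all add: algebra_simps)
  ultimately have "U c = U (c + s * int (m + 2)) \<or> U c = U (c + s * int m)"
    by argo
  moreover have "rim_walk c s (m + 2) ! 0 \<noteq> rim_walk c s (m + 2) ! m"
    using nth_eq_iff_index_eq[OF distinct, of 0 m] \<open>1 \<le> m\<close> by simp
  ultimately have "int n dvd int (m + 2)"
    using U_walk_eq_iff[OF s, of c "int (m + 2)" 0] by (auto simp: eq_commute)
  moreover have "m + 2 \<le> n"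
    using distinct distinct_rim_walk_iff[OF s] by blast
  ultimately show ?thesis
    using zdvd_imp_le[of "int n" "int (m + 2)"] by simp
qed

lemma rim_cycle_length:
  assumes cycle: "is_cycle E vs" and "h \<notin> set vs"
  shows "length vs = n"
proof -
  have "3 \<le> length vs" and "distinct vs"
    using cycle unfolding is_cycle_def by auto
  then obtain m where m: "length vs = m + 2" "1 \<le> m"
    by (intro that[of "length vs - 2"]) simp_all
  have "set vs \<subseteq> range U"
    using is_cycle_set_subset[OF cycle] Union_E_subset \<open>h \<notin> set vs\<close> V_eq by blast
  then have "\<exists>c s. \<bar>s\<bar> = 1 \<and> vs = rim_walk c s (length vs)"
    using is_cycle_successively[OF cycle] \<open>distinct vs\<close> m by (intro rim_path_is_rim_walk) auto
  then obtain c s where s: "\<bar>s\<bar> = 1" and vs: "vs = rim_walk c s (m + 2)"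
    using m by auto
  have "m + 1 < length vs"
    using m by simp
  with cycle have "{vs ! (m + 1), vs ! ((m + 1 + 1) mod length vs)} \<in> E"
    unfolding is_cycle_def by blast
  then have "{U (c + s * int (m + 1)), U c} \<in> E"
    using vs m by simp
  with s m \<open>distinct vs\<close> vs show ?thesis
    using closed_rim_walk_length by simp
qed

lemma hub_cycle_complement:
  assumes cycle: "is_cycle E vs" and "h \<in> set vs"
  shows "\<exists>c s. \<bar>s\<bar> = 1 \<and> V - set vs = set (rim_walk c s (n + 1 - length vs))"
proof -
  obtain k where "k < length vs" "vs ! k = h"
    using \<open>h \<in> set vs\<close> by (auto simp: in_set_conv_nth)
  moreover from this have "vs \<noteq> []"
    by auto
  ultimately have "hd (rotate k vs) = h"
    using hd_rotate_conv_nth[of vs k] by simp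
  moreover have rotated: "is_cycle E (rotate k vs)"
    using is_cycle_rotate[OF cycle] .
  ultimately obtain q where q: "rotate k vs = h # q"
    unfolding is_cycle_def by (metis hd_Cons_tl list.size(3) not_numeral_le_zero)
  have distinct: "distinct (h # q)" and "2 \<le> length q"
    and path: "successively (\<lambda>x y. {x, y} \<in> E) (h # q)"
    using rotated is_cycle_successively[OF rotated] unfolding q is_cycle_def by simp_all
  have vs: "set vs = insert h (set q)" "length vs = length q + 1"
    using set_rotate[of k vs] length_rotate[of k vs] unfolding q by simp_all
  have "set vs \<subseteq> V"
    using is_cycle_set_subset[OF cycle] Union_E_subset by blast
  with distinct have "set q \<subseteq> range U"
    using V_eq vs by auto
  then have "\<exists>c s. \<bar>s\<bar> = 1 \<and> q = rim_walk c s (length q)"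
    using distinct path \<open>2 \<le> length q\<close>
    by (intro rim_path_is_rim_walk) (auto simp: successively_Cons)
  then obtain c s where s: "\<bar>s\<bar> = 1" and q_walk: "q = rim_walk c s (length q)"
    by blast
  have "length q \<le> n"
    using distinct_rim_walk_iff[OF s, of c "length q"] distinct q_walk by simp
  have "V - set vs = range U - set q"
    using vs hub_notin_rim V_eq by auto
  also have "\<dots> = set (rim_walk (c + s * int (length q)) s (n - length q))"
    using rim_walk_complement[OF s \<open>length q \<le> n\<close>, of c] q_walk by simp
  finally show ?thesis
    using s vs by auto
qed

lemma has_perfect_matching_del_even_cycle:
  assumes cycle: "is_cycle E vs" and "even (length vs)"
  shows "has_perfect_matching (del_verts_V V (set vs)) (del_verts_E E (set vs))"
proof -
  have "h \<in> set vs"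
    using rim_cycle_length[OF cycle] odd_n assms(2) by auto
  then obtain c s where s: "\<bar>s\<bar> = 1"
    and complement: "V - set vs = set (rim_walk c s (n + 1 - length vs))"
    using hub_cycle_complement[OF cycle] by blast
  have "3 \<le> length vs"
    using cycle unfolding is_cycle_def by simp
  then have "distinct (rim_walk c s (n + 1 - length vs))"
    using distinct_rim_walk_iff[OF s] by simp
  moreover have "even (length (rim_walk c s (n + 1 - length vs)))"
    using odd_n assms(2) by simp
  ultimately show ?thesis
    using has_perfect_matching_path_del_verts[OF _ _ successively_rim_walk[OF s]] complement
    unfolding del_verts_V_def by (metis Diff_disjoint inf_commute)
qed

lemma cycle_extendable: "cycle_extendable V E"
  unfolding cycle_extendable_def
  using matching_covered has_perfect_matching_del_even_cycle by blast

end

lemma odd_wheel_imp_periodic_odd_wheel: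
  assumes "odd_wheel V E"
  shows "\<exists>n U h. periodic_odd_wheel n U h V E"
proof -
  obtain k :: nat and h u where k: "1 \<le> k" and inj: "inj_on u {0..2*k}"
    and hub: "h \<notin> u ` {0..2*k}" and V: "V = insert h (u ` {0..2*k})"
    and E: "E = {{u i, u ((i + 1) mod (2*k+1))} | i. i \<le> 2*k} \<union> {{h, u i} | i. i \<le> 2*k}"
    using assms unfolding odd_wheel_def by blast
  define n where "n = 2 * k + 1"
  define U where "U i = u (nat (i mod int n))" for i
  have "0 < n" and indices: "{0..2*k} = {..<n}"
    by (auto simp: n_def)
  have image: "{f i | i. i \<le> 2 * k} = f ` {..<n}" for f :: "nat \<Rightarrow> 'a set"
    by (auto simp: n_def)
  have "nat ((i + 1) mod int n) = (nat (i mod int n) + 1) mod n" for i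
  proof -
    have "nat ((i + 1) mod int n) = nat ((i mod int n + 1) mod int n)"
      by (simp add: mod_add_left_eq)
    also have "\<dots> = (nat (i mod int n) + 1) mod n"
      using \<open>0 < n\<close> by (simp add: nat_mod_distrib nat_add_distrib)
    finally show ?thesis .
  qed
  then have "E = range (\<lambda>i. {U i, U (i + 1)}) \<union> range (\<lambda>i. {h, U i})"
    unfolding E image n_def[symmetric] U_def
    using range_nat_mod[OF \<open>0 < n\<close>, of "\<lambda>j. {u j, u ((j + 1) mod n)}"]
      range_nat_mod[OF \<open>0 < n\<close>, of "\<lambda>j. {h, u j}"]
    by simp
  moreover have "range U = u ` {..<n}"
    unfolding U_def using \<open>0 < n\<close> by (rule range_nat_mod)
  moreover have "U i = U j \<longleftrightarrow> i mod int n = j mod int n" for i j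
  proof
    assume "U i = U j"
    moreover have "nat (i mod int n) \<in> {0..2*k}" "nat (j mod int n) \<in> {0..2*k}"
      using \<open>0 < n\<close> by (simp_all add: indices nat_less_iff)
    ultimately show "i mod int n = j mod int n"
      using inj \<open>0 < n\<close> unfolding U_def by (simp add: inj_on_eq_iff eq_nat_nat_iff)
  qed (simp add: U_def)
  ultimately have "periodic_odd_wheel n U h V E"
    using k hub V indices by unfold_locales (auto simp: n_def)
  then show ?thesis
    by blast
qed

theorem proposition4p1:
  fixes V :: "'a set" and E :: "'a set set"
  assumes "odd_wheel V E"
  shows "cycle_extendable V E"
proof -
  obtain n U h where "periodic_odd_wheel n U h V E"
    using odd_wheel_imp_periodic_odd_wheel[OF assms] by blast
  then show ?thesis
    by (rule periodic_odd_wheel.cycle_extendable)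
qed

end
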